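(* Let $p=p_1\otimes\cdots\otimes p_L\in B_{\lambda_1}\otimes\cdots\otimes B_{\lambda_L}$ be any state. For $M_1,\dots,M_n\ge0$ let $$p_{\rm vac}=(1\otimes2\otimes\cdots\otimes n)^{\otimes M_n}\otimes\cdots\otimes(1\otimes2)^{\otimes M_2}\otimes 1^{\otimes M_1}\in B_1^{\otimes L_0},$$ where a letter $a$ denotes the element of $B_1$ with $x_a=1$, $L_0=\sum_{b=1}^n bM_b$ and $L_1=\sum_{b=2}^n(b-1)M_b$. Then, for $M_1,\dots,M_n$ sufficiently large, for all $1\le k\le L$ and $1\le i\le n+1$, $$\rho_i(p_{\rm vac}\otimes p_1\otimes\cdots\otimes p_k)=\rho_i(p_{\rm vac})+L_1k+\rho_i(p_1\otimes\cdots\otimes p_k).$$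
   Context: Fix $n\ge1$. For $l\ge1$ let $B_l=\{x=(x_1,\dots,x_{n+1})\in\mathbb Z_{\ge0}^{n+1}: \sum_i x_i=l\}$ and $u_l=(l,0,\dots,0)\in B_l$. Indices of $x$ are read modulo $n+1$. For $x\in B_l,y\in B_m$ and $i\in\mathbb Z$ put $Q_i(x\otimes y)=\min_{1\le k\le n+1}\big(\sum_{j=1}^{k-1}x_{i+j}+\sum_{j=k+1}^{n+1}y_{i+j}\big)$. The combinatorial $R$ is the map $B_l\otimes B_m\to B_m\otimes B_l$, $x\otimes y\mapsto\tilde y\otimes\tilde x$, $\tilde x_i=x_i+Q_i-Q_{i-1}$, $\tilde y_i=y_i+Q_{i-1}-Q_i$ ($Q_j=Q_j(x\otimes y)$); write $x\otimes y\simeq\tilde y\otimes\tilde x$. Box-ball system: for a state $q=q_1\otimes\cdots\otimes q_K\in B_{\kappa_1}\otimes\cdots\otimes B_{\kappa_K}$ and $l\ge1$ let $v_0=u_l$ and recursively $v_{j-1}\otimes q_j\simeq q'_j\otimes v_j$; then $T_l(q)=q'_1\otimes\cdots\otimes q'_K$. For all sufficiently large $l$, $T_l(q)$ is independent of $l$; this is $T_\infty(q)$. Writing $T_\infty^t(q)=q^t_1\otimes\cdots\otimes q^t_K$, $q^t_j=(x^t_{j,1},\dots,x^t_{j,n+1})$, define $\rho_d(q)=\sum_{j=1}^K(x^0_{j,2}+\cdots+x^0_{j,d})+\sum_{t\ge1}\sum_{j=1}^K(x^t_{j,2}+\cdots+x^t_{j,n+1})$ for $1\le d\le n+1$ (a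 finite sum). *)

theory Defs
  imports Main
begin

text \<open>An element x of B_l (for fixed n) is an int list of length n+1;
  the paper's coordinate x_i (i in Z, read modulo n+1, 1-based) is xc n x i.\<close>

definition inB :: "nat \<Rightarrow> nat \<Rightarrow> int list \<Rightarrow> bool" where
  "inB n l x \<longleftrightarrow> length x = n + 1 \<and> (\<forall>a\<in>set x. a \<ge> 0) \<and> sum_list x = int l"

definition xc :: "nat \<Rightarrow> int list \<Rightarrow> int \<Rightarrow> int" where
  "xc n x i = x ! nat ((i - 1) mod int (n + 1))"

definition uvec :: "nat \<Rightarrow> nat \<Rightarrow> int list" where
  "uvec n l = int l # replicate n 0"

definition Qf :: "nat \<Rightarrow> int list \<Rightarrow> int list \<Rightarrow> int \<Rightarrow> int" where
  "Qf n x y i = Min ((\<lambda>k. (\<Sum>j\<in>{1..<k}. xc n x (i + int j)) + (\<Sum>j\<in>{k+1..n+1}. xc n y (i + int j)))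
                     ` {1..n+1})"

text \<open>Combinatorial R: x \<otimes> y \<mapsto> ytilde \<otimes> xtilde, returned as the pair (ytilde, xtilde).\<close>
definition Rmap :: "nat \<Rightarrow> int list \<Rightarrow> int list \<Rightarrow> int list \<times> int list" where
  "Rmap n x y =
    (map (\<lambda>i. xc n y (int i) + Qf n x y (int i - 1) - Qf n x y (int i)) [1..<n+2],
     map (\<lambda>i. xc n x (int i) + Qf n x y (int i) - Qf n x y (int i - 1)) [1..<n+2])"

text \<open>Carrier pass: v_{j-1} \<otimes> q_j \<simeq> q'_j \<otimes> v_j.\<close>
fun Tcar :: "nat \<Rightarrow> int list \<Rightarrow> int list list \<Rightarrow> int list list" where
  "Tcar n v [] = []"
| "Tcar n v (q # qs) = (case Rmap n v q of (q', v') \<Rightarrow> q' # Tcar n v' qs)"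

definition Tl :: "nat \<Rightarrow> nat \<Rightarrow> int list list \<Rightarrow> int list list" where
  "Tl n l q = Tcar n (uvec n l) q"

definition Tinf :: "nat \<Rightarrow> int list list \<Rightarrow> int list list" where
  "Tinf n q = (THE r. \<exists>L. \<forall>l\<ge>L. Tl n l q = r)"

text \<open>rho_d(q): coordinates a=2..d of the initial state plus coordinates 2..n+1
  of all later time steps (finite sum over the support of the time summand).\<close>
definition rho :: "nat \<Rightarrow> nat \<Rightarrow> int list list \<Rightarrow> int" where
  "rho n d q =
     (\<Sum>j<length q. \<Sum>a\<in>{2..d}. (q ! j) ! (a - 1)) +
     (let g = (\<lambda>t. let qt = (Tinf n ^^ t) q in
                   \<Sum>j<length qt. \<Sum>a\<in>{2..n+1}. (qt ! j) ! (a - 1))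
      in \<Sum>t\<in>{t. 1 \<le> t \<and> g t \<noteq> 0}. g t)"

definition letter :: "nat \<Rightarrow> nat \<Rightarrow> int list" where
  "letter n a = map (\<lambda>i. if i = a then 1 else 0) [1..<n+2]"

definition pvac :: "nat \<Rightarrow> (nat \<Rightarrow> nat) \<Rightarrow> int list list" where
  "pvac n M = concat (map (\<lambda>b. concat (replicate (M b) (map (letter n) [1..<b+1]))) (rev [1..<n+1]))"

definition L1 :: "nat \<Rightarrow> (nat \<Rightarrow> nat) \<Rightarrow> nat" where
  "L1 n M = (\<Sum>b\<in>{2..n}. (b - 1) * M b)"

end

theory Submission
  imports Defs
begin

text \<open>
  The coordinate x_1 of a box counts its vacancies (letters 1), the others its balls. Once the
  vacancies of the carrier reach the total capacity of a state, further vacancies pass through R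
  unchanged, so T_infinity = T_l for every l at least the capacity. The carrier of T_infinity
  enters without balls and, having room for everything it meets, never drops more balls than it
  holds; hence after t steps the first t boxes are empty, and rho is a finite sum of ball counts
  over time.

  If the boxes carry the letters of a staircase word (each letter is 1 or the successor of the
  previous one), R just exchanges the letters of carrier and box, so T_infinity shifts the word
  one box to the right. The vacuum p_vac is such a word ending in 1^M_1. For k \<le> M_1 the
  carrier leaves the vacuum with letter 1 during the first k steps, so the vacuum (keeping its L_1
  balls) and p_1 ... p_k evolve independently; after k steps all balls of p have left, and the
  vacuum word behind k empty boxes evolves like the vacuum alone. Counted over time, the vacuum
  thus contributes k extra times L_1 balls.
\<close>

section \<open>The combinatorial R\<close>

definition Qterm :: "nat \<Rightarrow> int list \<Rightarrow> int list \<Rightarrow> int \<Rightarrow> nat \<Rightarrow> int" where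
  "Qterm n x y i k = (\<Sum>j\<in>{1..<k}. xc n x (i + int j)) + (\<Sum>j\<in>{k+1..n+1}. xc n y (i + int j))"

lemma Qf_eq_Min_Qterm: "Qf n x y i = Min (Qterm n x y i ` {1..n+1})"
  unfolding Qf_def Qterm_def by simp

lemma Qf_le_Qterm: "k \<in> {1..n+1} \<Longrightarrow> Qf n x y i \<le> Qterm n x y i k"
  unfolding Qf_eq_Min_Qterm by (rule Min_le) auto

lemma Qf_attained: obtains k where "k \<in> {1..n+1}" "Qf n x y i = Qterm n x y i k"
proof -
  have "Min (Qterm n x y i ` {1..n+1}) \<in> Qterm n x y i ` {1..n+1}"
    by (rule Min_in) auto
  thus ?thesis using that unfolding Qf_eq_Min_Qterm by blast
qed

lemma Qf_greatest: "(\<And>k. k \<in> {1..n+1} \<Longrightarrow> v \<le> Qterm n x y i k) \<Longrightarrow> v \<le> Qf n x y i"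
  by (metis Qf_attained)

lemma Qf_eqI:
  "k \<in> {1..n+1} \<Longrightarrow> Qterm n x y i k = v \<Longrightarrow> (\<And>k. k \<in> {1..n+1} \<Longrightarrow> v \<le> Qterm n x y i k)
    \<Longrightarrow> Qf n x y i = v"
  by (metis Qf_greatest Qf_le_Qterm antisym)

lemma xc_periodic: "xc n x (z + int (n+1)) = xc n x z"
proof -
  have "(z + int (n+1) - 1) mod int (n+1) = (z - 1) mod int (n+1)"
    by (metis add_diff_eq diff_add_eq mod_add_self2)
  thus ?thesis unfolding xc_def by simp
qed

lemma Qf_periodic: "Qf n x y (i + int (n+1)) = Qf n x y i"
proof -
  have "Qterm n x y (i + int (n+1)) k = Qterm n x y i k" for k
  proof -
    have "xc n z (i + int (n+1) + int j) = xc n z (i + int j)" for z j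
      using xc_periodic[of n z "i + int j"] by (simp add: algebra_simps)
    thus ?thesis unfolding Qterm_def by simp
  qed
  thus ?thesis unfolding Qf_eq_Min_Qterm by simp
qed

lemma xc_eq_nth: "i < n + 1 \<Longrightarrow> xc n x (int i + 1) = x ! i"
  unfolding xc_def by simp

lemma sum_xc_shift: "(\<Sum>j\<in>{1..n+1}. xc n x (i + 1 + int j)) = (\<Sum>j\<in>{1..n+1}. xc n x (i + int j))"
  using sum.shift_bounds_cl_Suc_ivl[of "\<lambda>j. xc n x (i + int j)" 1 "n+1"]
    sum.atLeast_Suc_atMost[of 1 "n+1" "\<lambda>j. xc n x (i + int j)"]
    sum.cl_ivl_Suc[of "\<lambda>j. xc n x (i + int j)" 1 "n+1"] xc_periodic[of n x "i+1"]
  by (simp add: algebra_simps)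

lemma sum_xc_cycle: "length x = n + 1 \<Longrightarrow> (\<Sum>j\<in>{1..n+1}. xc n x (i + int j)) = sum_list x"
proof (induction i rule: int_induct[where k = 0])
  case base
  have "(\<Sum>j\<in>{Suc 0..Suc n}. xc n x (int j)) = (\<Sum>j\<in>{0..n}. xc n x (int (Suc j)))"
    by (rule sum.shift_bounds_cl_Suc_ivl)
  also have "\<dots> = (\<Sum>j<n+1. x ! j)"
    by (rule sum.cong) (auto simp: xc_def)
  finally show ?case using base by (simp add: sum_list_sum_nth atLeast0LessThan)
next
  case (step1 i)
  thus ?case using sum_xc_shift[of n x i] by simp
next
  case (step2 i)
  thus ?case using sum_xc_shift[of n x "i - 1"] by simp
qed

definition is_box :: "nat \<Rightarrow> int list \<Rightarrow> bool" where
  "is_box n x \<longleftrightarrow> length x = n + 1 \<and> (\<forall>a\<in>set x. a \<ge> 0)"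

lemma inB_iff_is_box: "inB n l x \<longleftrightarrow> is_box n x \<and> sum_list x = int l"
  unfolding inB_def is_box_def by auto

lemma is_box_iff_nth: "is_box n x \<longleftrightarrow> length x = n + 1 \<and> (\<forall>i<n+1. x ! i \<ge> 0)"
  unfolding is_box_def by (auto simp: all_set_conv_all_nth)

lemma xc_nonneg: "is_box n x \<Longrightarrow> xc n x z \<ge> 0"
  unfolding is_box_iff_nth xc_def by (simp add: nat_less_iff)

lemma Qterm_nonneg: "is_box n x \<Longrightarrow> is_box n y \<Longrightarrow> Qterm n x y i k \<ge> 0"
  unfolding Qterm_def by (intro add_nonneg_nonneg sum_nonneg) (auto intro: xc_nonneg)

lemma Qf_nonneg: "is_box n x \<Longrightarrow> is_box n y \<Longrightarrow> Qf n x y i \<ge> 0"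
  by (rule Qf_greatest) (rule Qterm_nonneg)

lemma Qterm_pred_Suc:
  assumes "1 \<le> k" "k \<le> n"
  shows "Qterm n x y (i - 1) (k+1) = xc n x i + Qterm n x y i k - xc n y i"
proof -
  have "(\<Sum>j\<in>{1..<k+1}. xc n x (i - 1 + int j)) = (\<Sum>j\<in>{0..<k}. xc n x (i + int j))"
    using sum.shift_bounds_Suc_ivl[of "\<lambda>j. xc n x (i - 1 + int j)" 0 k] by simp
  also have "\<dots> = xc n x i + (\<Sum>j\<in>{1..<k}. xc n x (i + int j))"
    using sum.atLeast_Suc_lessThan[of 0 k "\<lambda>j. xc n x (i + int j)"] assms by simp
  moreover have "(\<Sum>j\<in>{k+1+1..n+1}. xc n y (i - 1 + int j)) = (\<Sum>j\<in>{k+1..n}. xc n y (i + int j))"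
    using sum.shift_bounds_cl_Suc_ivl[of "\<lambda>j. xc n y (i - 1 + int j)" "k+1" n] by simp
  moreover have "(\<Sum>j\<in>{k+1..n+1}. xc n y (i + int j)) = (\<Sum>j\<in>{k+1..n}. xc n y (i + int j)) + xc n y i"
    using sum.cl_ivl_Suc[of "\<lambda>j. xc n y (i + int j)" "k+1" n] assms xc_periodic[of n y i]
    by (simp add: add.commute)
  ultimately show ?thesis unfolding Qterm_def by simp
qed

lemma Qterm_1_pred:
  assumes "1 \<le> n"
  shows "Qterm n x y i 1 = Qterm n x y (i - 1) 1 - xc n y (i + 1) + xc n y i"
proof -
  have "(\<Sum>j\<in>{1+1..n+1}. xc n y (i - 1 + int j)) = (\<Sum>j\<in>{1..n}. xc n y (i + int j))"
    using sum.shift_bounds_cl_Suc_ivl[of "\<lambda>j. xc n y (i - 1 + int j)" 1 n] by simp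
  moreover have "(\<Sum>j\<in>{1..n}. xc n y (i + int j)) = xc n y (i + 1) + (\<Sum>j\<in>{2..n}. xc n y (i + int j))"
    using sum.atLeast_Suc_atMost[of 1 n "\<lambda>j. xc n y (i + int j)"] assms
    by (simp add: numeral_2_eq_2)
  moreover have "(\<Sum>j\<in>{2..n+1}. xc n y (i + int j)) = (\<Sum>j\<in>{2..n}. xc n y (i + int j)) + xc n y i"
    using sum.cl_ivl_Suc[of "\<lambda>j. xc n y (i + int j)" 2 n] assms xc_periodic[of n y i]
    by (simp add: add.commute)
  ultimately show ?thesis unfolding Qterm_def by (simp add: numeral_2_eq_2)
qed

lemma Qterm_last_pred:
  assumes "1 \<le> n"
  shows "Qterm n x y (i - 1) (n+1) = xc n x i + (\<Sum>j\<in>{1..<n}. xc n x (i + int j))"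
    and "Qterm n x y i (n+1) = (\<Sum>j\<in>{1..<n}. xc n x (i + int j)) + xc n x (i + int n)"
proof -
  have "(\<Sum>j\<in>{1..<n+1}. xc n x (i - 1 + int j)) = (\<Sum>j\<in>{0..<n}. xc n x (i + int j))"
    using sum.shift_bounds_Suc_ivl[of "\<lambda>j. xc n x (i - 1 + int j)" 0 n] by simp
  moreover have "(\<Sum>j\<in>{0..<n}. xc n x (i + int j)) = xc n x i + (\<Sum>j\<in>{1..<n}. xc n x (i + int j))"
    using sum.atLeast_Suc_lessThan[of 0 n "\<lambda>j. xc n x (i + int j)"] assms by simp
  ultimately show "Qterm n x y (i - 1) (n+1) = xc n x i + (\<Sum>j\<in>{1..<n}. xc n x (i + int j))"
    unfolding Qterm_def by simp
  show "Qterm n x y i (n+1) = (\<Sum>j\<in>{1..<n}. xc n x (i + int j)) + xc n x (i + int n)"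
    unfolding Qterm_def using sum.atLeastLessThan_Suc[of 1 n "\<lambda>j. xc n x (i + int j)"] assms
    by simp
qed

text \<open>These two bounds are exactly the nonnegativity of the coordinates of the image of R.\<close>

lemma Qf_le_Qf_pred_plus_right:
  assumes "1 \<le> n" "is_box n x" "is_box n y"
  shows "Qf n x y i \<le> Qf n x y (i - 1) + xc n y i"
proof -
  obtain k' where k': "k' \<in> {1..n+1}" "Qf n x y (i - 1) = Qterm n x y (i - 1) k'"
    by (rule Qf_attained)
  show ?thesis
  proof (cases "k' = 1")
    case True
    have "Qf n x y i \<le> Qterm n x y i 1" by (rule Qf_le_Qterm) simp
    also have "\<dots> = Qterm n x y (i - 1) 1 - xc n y (i + 1) + xc n y i"
      by (rule Qterm_1_pred[OF assms(1)])
    also have "\<dots> \<le> Qterm n x y (i - 1) 1 + xc n y i" using xc_nonneg[OF assms(3)] by simp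
    finally show ?thesis using k' True by simp
  next
    case False
    then obtain k where k: "k' = k + 1" "1 \<le> k" "k \<le> n" using k' by (cases k') auto
    have "Qf n x y i \<le> Qterm n x y i k" by (rule Qf_le_Qterm) (use k in simp)
    also have "\<dots> = Qterm n x y (i - 1) k' - xc n x i + xc n y i"
      using Qterm_pred_Suc[OF k(2,3)] k by simp
    also have "\<dots> \<le> Qterm n x y (i - 1) k' + xc n y i" using xc_nonneg[OF assms(2)] by simp
    finally show ?thesis using k' by simp
  qed
qed

lemma Qf_pred_le_Qf_plus_left:
  assumes "1 \<le> n" "is_box n x" "is_box n y"
  shows "Qf n x y (i - 1) \<le> Qf n x y i + xc n x i"
proof -
  obtain k where k: "k \<in> {1..n+1}" "Qf n x y i = Qterm n x y i k" by (rule Qf_attained)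
  show ?thesis
  proof (cases "k = n + 1")
    case True
    have "Qf n x y (i - 1) \<le> Qterm n x y (i - 1) (n+1)" by (rule Qf_le_Qterm) simp
    also have "\<dots> \<le> Qterm n x y i (n+1) + xc n x i"
      using Qterm_last_pred[OF assms(1), of x y i] xc_nonneg[OF assms(2)] by simp
    finally show ?thesis using k True by simp
  next
    case False
    hence k': "1 \<le> k" "k \<le> n" using k by auto
    have "Qf n x y (i - 1) \<le> Qterm n x y (i - 1) (k+1)" by (rule Qf_le_Qterm) (use k' in simp)
    also have "\<dots> = xc n x i + Qterm n x y i k - xc n y i" by (rule Qterm_pred_Suc[OF k'])
    also have "\<dots> \<le> Qterm n x y i k + xc n x i" using xc_nonneg[OF assms(3)] by simp
    finally show ?thesis using k by simp
  qed
qed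

lemma length_Rmap: "length (fst (Rmap n x y)) = n + 1" "length (snd (Rmap n x y)) = n + 1"
  unfolding Rmap_def by simp_all

lemma nth_Rmap_fst:
  "i < n + 1 \<Longrightarrow> fst (Rmap n x y) ! i = y ! i + Qf n x y (int i) - Qf n x y (int i + 1)"
  unfolding Rmap_def using xc_eq_nth[of i n y] by (simp del: upt_Suc add: add.commute)

lemma nth_Rmap_snd:
  "i < n + 1 \<Longrightarrow> snd (Rmap n x y) ! i = x ! i + Qf n x y (int i + 1) - Qf n x y (int i)"
  unfolding Rmap_def using xc_eq_nth[of i n x] by (simp del: upt_Suc add: add.commute)

lemma is_box_Rmap:
  assumes "1 \<le> n" "is_box n x" "is_box n y"
  shows "is_box n (fst (Rmap n x y))" "is_box n (snd (Rmap n x y))"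
proof -
  show "is_box n (fst (Rmap n x y))" unfolding is_box_iff_nth
  proof (intro conjI allI impI)
    fix i assume i: "i < n + 1"
    have "Qf n x y (int i + 1) \<le> Qf n x y (int i + 1 - 1) + xc n y (int i + 1)"
      by (rule Qf_le_Qf_pred_plus_right[OF assms])
    thus "fst (Rmap n x y) ! i \<ge> 0" using nth_Rmap_fst[OF i] xc_eq_nth[OF i] by simp
  qed (simp add: length_Rmap)
  show "is_box n (snd (Rmap n x y))" unfolding is_box_iff_nth
  proof (intro conjI allI impI)
    fix i assume i: "i < n + 1"
    have "Qf n x y (int i + 1 - 1) \<le> Qf n x y (int i + 1) + xc n x (int i + 1)"
      by (rule Qf_pred_le_Qf_plus_left[OF assms])
    thus "snd (Rmap n x y) ! i \<ge> 0" using nth_Rmap_snd[OF i] xc_eq_nth[OF i] by simp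
  qed (simp add: length_Rmap)
qed

lemma sum_list_Rmap:
  assumes "length x = n + 1" "length y = n + 1"
  shows "sum_list (fst (Rmap n x y)) = sum_list y" "sum_list (snd (Rmap n x y)) = sum_list x"
proof -
  let ?Q = "Qf n x y"
  have xc_sum: "(\<Sum>i\<in>{1..<n+2}. xc n z (int i)) = sum_list z" if "length z = n + 1" for z
    using sum_xc_cycle[OF that, of 0] by (simp add: atLeastLessThanSuc_atLeastAtMost)
  have "(\<Sum>i\<in>{1..<n+2}. ?Q (int i - 1) - ?Q (int i)) = (\<Sum>i<n+1. ?Q (int i) - ?Q (int (Suc i)))"
    using sum.shift_bounds_Suc_ivl[of "\<lambda>i. ?Q (int i - 1) - ?Q (int i)" 0 "n+1"]
    by (simp add: atLeast0LessThan)
  also have "\<dots> = ?Q 0 - ?Q (int (n+1))" using sum_lessThan_telescope'[of "\<lambda>i. ?Q (int i)" "n+1"] by simp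
  also have "\<dots> = 0" using Qf_periodic[of n x y 0] by simp
  finally have telescope: "(\<Sum>i\<in>{1..<n+2}. ?Q (int i - 1) - ?Q (int i)) = 0" .
  have "sum_list (fst (Rmap n x y)) = (\<Sum>i\<in>{1..<n+2}. xc n y (int i) + (?Q (int i - 1) - ?Q (int i)))"
    unfolding Rmap_def fst_conv sum_set_upt_conv_sum_list_nat[symmetric] set_upt
    by (simp add: algebra_simps)
  thus "sum_list (fst (Rmap n x y)) = sum_list y"
    by (simp only: sum.distrib telescope xc_sum[OF assms(2)])
  have "sum_list (snd (Rmap n x y)) = (\<Sum>i\<in>{1..<n+2}. xc n x (int i) - (?Q (int i - 1) - ?Q (int i)))"
    unfolding Rmap_def snd_conv sum_set_upt_conv_sum_list_nat[symmetric] set_upt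
    by (simp add: algebra_simps)
  thus "sum_list (snd (Rmap n x y)) = sum_list x"
    by (simp only: sum_subtractf[of _ "\<lambda>i. ?Q (int i - 1) - ?Q (int i)"] telescope xc_sum[OF assms(1)])
qed

definition balls :: "nat \<Rightarrow> int list \<Rightarrow> int" where
  "balls n x = (\<Sum>a\<in>{2..n+1}. x ! (a - 1))"

lemma balls_eq_sum_nth: "balls n x = (\<Sum>i\<in>{1..n}. x ! i)"
  unfolding balls_def using sum.shift_bounds_cl_Suc_ivl[of "\<lambda>a. x ! (a - 1)" 1 n]
  by (simp add: numeral_2_eq_2)

lemma sum_list_eq_nth_0_plus_balls:
  assumes "length x = n + 1"
  shows "sum_list x = x ! 0 + balls n x"
proof -
  have "sum_list x = (\<Sum>i\<in>{0..n}. x ! i)"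
    using assms by (simp add: sum_list_sum_nth atLeast0LessThan atLeast0AtMost lessThan_Suc_atMost)
  also have "\<dots> = x ! 0 + (\<Sum>i\<in>{1..n}. x ! i)" by (simp add: sum.atLeast_Suc_atMost)
  finally show ?thesis by (simp add: balls_eq_sum_nth)
qed

lemma balls_nonneg: "is_box n x \<Longrightarrow> balls n x \<ge> 0"
  unfolding balls_def is_box_iff_nth by (intro sum_nonneg) auto

lemma balls_le_sum_list: "is_box n x \<Longrightarrow> balls n x \<le> sum_list x"
  using sum_list_eq_nth_0_plus_balls[of x n] unfolding is_box_iff_nth by force

lemma balls_Rmap:
  assumes "length x = n + 1" "length y = n + 1"
  shows "balls n (fst (Rmap n x y)) + balls n (snd (Rmap n x y)) = balls n x + balls n y"
  using sum_list_eq_nth_0_plus_balls[of "fst (Rmap n x y)" n]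
    sum_list_eq_nth_0_plus_balls[of "snd (Rmap n x y)" n]
    sum_list_Rmap[OF assms] sum_list_eq_nth_0_plus_balls[OF assms(1)]
    sum_list_eq_nth_0_plus_balls[OF assms(2)] nth_Rmap_fst[of 0 n x y] nth_Rmap_snd[of 0 n x y]
  by (simp add: length_Rmap)

lemma Qterm_1_le_sum_list: "is_box n y \<Longrightarrow> Qterm n x y i 1 \<le> sum_list y"
proof -
  assume y: "is_box n y"
  have "Qterm n x y i 1 = (\<Sum>j\<in>{2..n+1}. xc n y (i + int j))"
    unfolding Qterm_def by (simp add: numeral_2_eq_2)
  also have "\<dots> \<le> (\<Sum>j\<in>{1..n+1}. xc n y (i + int j))"
    by (rule sum_mono2) (auto intro: xc_nonneg[OF y])
  also have "\<dots> = sum_list y" using sum_xc_cycle y unfolding is_box_def by blast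
  finally show ?thesis .
qed

lemma Qterm_ge_nth_0:
  assumes "is_box n x" "is_box n y" "j \<in> {1..<k}" "(i + int j - 1) mod int (n+1) = 0"
  shows "Qterm n x y i k \<ge> x ! 0"
proof -
  have "x ! 0 = xc n x (i + int j)" unfolding xc_def using assms(4) by simp
  also have "\<dots> \<le> (\<Sum>j\<in>{1..<k}. xc n x (i + int j))"
    by (rule member_le_sum[OF assms(3)]) (auto intro: xc_nonneg[OF assms(1)])
  finally show ?thesis
    using sum_nonneg[of "{k+1..n+1}" "\<lambda>j. xc n y (i + int j)"] xc_nonneg[OF assms(2)]
    unfolding Qterm_def by fastforce
qed

lemma xc_add_nth_0:
  assumes "length x = n + 1"
  shows "xc n (x[0 := x ! 0 + c]) z = xc n x z + (if (z - 1) mod int (n+1) = 0 then c else 0)"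
proof -
  have "nat ((z - 1) mod int (n + 1)) < length x" using assms by (simp add: nat_less_iff)
  moreover have "nat ((z - 1) mod int (n + 1)) = 0 \<longleftrightarrow> (z - 1) mod int (n + 1) = 0"
    by (simp add: nat_eq_iff)
  ultimately show ?thesis unfolding xc_def by (auto simp: nth_list_update)
qed

text \<open>Since x_1 is at least the capacity of y, every term of the minimum defining Q that
  involves x_1 is dominated by the term k = 1, which does not.\<close>

lemma Qf_add_nth_0:
  assumes "is_box n x" "is_box n y" "x ! 0 \<ge> sum_list y" "c \<ge> 0"
  shows "Qf n (x[0 := x ! 0 + c]) y i = Qf n x y i"
proof -
  let ?x' = "x[0 := x ! 0 + c]"
  define D where "D k = (\<Sum>j\<in>{1..<k}. (if (i + int j - 1) mod int (n+1) = 0 then c else 0))" for k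
  have Qterm_x': "Qterm n ?x' y i k = Qterm n x y i k + D k" for k
    using assms(1) unfolding Qterm_def D_def is_box_def by (simp add: xc_add_nth_0 sum.distrib)
  have D_nonneg: "D k \<ge> 0" for k unfolding D_def using assms(4) by (auto intro: sum_nonneg)
  have "Qf n x y i \<le> Qf n ?x' y i"
  proof (rule Qf_greatest)
    fix k assume "k \<in> {1..n+1}"
    thus "Qf n x y i \<le> Qterm n ?x' y i k"
      using Qf_le_Qterm[of k n x y i] Qterm_x'[of k] D_nonneg[of k] by simp
  qed
  moreover have "Qf n ?x' y i \<le> Qf n x y i"
  proof -
    obtain k where k: "k \<in> {1..n+1}" "Qf n x y i = Qterm n x y i k" by (rule Qf_attained)
    show ?thesis
    proof (cases "D k = 0")
      case True thus ?thesis using Qf_le_Qterm[OF k(1), of ?x' y i] Qterm_x'[of k] k(2) by linarith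
    next
      case False
      have "\<exists>j\<in>{1..<k}. (i + int j - 1) mod int (n+1) = 0"
      proof (rule ccontr)
        assume "\<not> ?thesis"
        hence "D k = 0" unfolding D_def by (intro sum.neutral) auto
        thus False using False by simp
      qed
      then obtain j where "j \<in> {1..<k}" "(i + int j - 1) mod int (n+1) = 0" ..
      hence "Qterm n x y i k \<ge> x ! 0" by (rule Qterm_ge_nth_0[OF assms(1,2)])
      moreover have "Qf n ?x' y i \<le> Qterm n ?x' y i 1" by (rule Qf_le_Qterm) simp
      ultimately show ?thesis
        using Qterm_x'[of 1] Qterm_1_le_sum_list[OF assms(2), of x i] k(2) assms(3)
        by (simp add: D_def)
    qed
  qed
  ultimately show ?thesis by simp
qed

lemma Rmap_add_nth_0:
  assumes "is_box n x" "is_box n y" "x ! 0 \<ge> sum_list y" "c \<ge> 0"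
  shows "Rmap n (x[0 := x ! 0 + c]) y =
     (fst (Rmap n x y), (snd (Rmap n x y))[0 := snd (Rmap n x y) ! 0 + c])"
proof -
  let ?x' = "x[0 := x ! 0 + c]"
  have Q: "Qf n ?x' y = Qf n x y" using Qf_add_nth_0[OF assms] by auto
  have lx: "length x = n + 1" using assms(1) is_box_def by auto
  have "fst (Rmap n ?x' y) = fst (Rmap n x y)" unfolding Rmap_def Q by simp
  moreover have "snd (Rmap n ?x' y) = (snd (Rmap n x y))[0 := snd (Rmap n x y) ! 0 + c]"
  proof (rule nth_equalityI)
    fix i assume "i < length (snd (Rmap n ?x' y))"
    hence i: "i < n + 1" by (simp add: length_Rmap)
    thus "snd (Rmap n ?x' y) ! i = (snd (Rmap n x y))[0 := snd (Rmap n x y) ! 0 + c] ! i"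
      using nth_Rmap_snd[OF i, of ?x' y] nth_Rmap_snd[OF i, of x y] Q lx length_Rmap(2)[of n x y]
      by (cases "i = 0") (auto simp: nth_list_update)
  qed (simp add: length_Rmap)
  ultimately show ?thesis by (metis prod.collapse)
qed

lemma Rmap_snd_nth_0_ge:
  assumes "is_box n x" "is_box n y"
  shows "snd (Rmap n x y) ! 0 \<ge> x ! 0 - sum_list y"
  using Qf_nonneg[OF assms, of 1] Qf_le_Qterm[of 1 n x y 0] Qterm_1_le_sum_list[OF assms(2), of x 0]
    nth_Rmap_snd[of 0 n x y]
  by simp

lemma balls_Rmap_fst_le:
  assumes "is_box n x" "is_box n y" "x ! 0 \<ge> sum_list y"
  shows "balls n (fst (Rmap n x y)) \<le> balls n x"
proof -
  have ly: "length y = n + 1" and lx: "length x = n + 1" using assms is_box_def by auto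
  have Q0: "balls n y \<le> Qf n x y 0"
  proof (rule Qf_greatest)
    fix k assume k: "k \<in> {1..n+1}"
    show "balls n y \<le> Qterm n x y 0 k"
    proof (cases "k = 1")
      case True
      have "Qterm n x y 0 1 = (\<Sum>j\<in>{2..n+1}. xc n y (int j))"
        unfolding Qterm_def by (simp add: numeral_2_eq_2)
      also have "\<dots> = balls n y"
        unfolding balls_def by (rule sum.cong) (auto simp: xc_def nat_diff_distrib)
      finally show ?thesis using True by simp
    next
      case False
      hence "Qterm n x y 0 k \<ge> x ! 0" by (intro Qterm_ge_nth_0[OF assms(1,2), of 1]) (use k in auto)
      thus ?thesis using balls_le_sum_list[OF assms(2)] assms(3) by simp
    qed
  qed
  have "Qf n x y 1 \<le> Qterm n x y 1 (n+1)" by (rule Qf_le_Qterm) simp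
  also have "Qterm n x y 1 (n+1) = (\<Sum>j\<in>{1..<n+1}. xc n x (1 + int j))"
    unfolding Qterm_def by simp
  also have "\<dots> = balls n x"
    unfolding balls_eq_sum_nth by (rule sum.cong) (auto simp: xc_def)
  finally have Q1: "Qf n x y 1 \<le> balls n x" .
  show ?thesis
    using sum_list_eq_nth_0_plus_balls[of "fst (Rmap n x y)" n] sum_list_Rmap(1)[OF lx ly]
      sum_list_eq_nth_0_plus_balls[OF ly] nth_Rmap_fst[of 0 n x y] Q0 Q1
    by (simp add: length_Rmap)
qed

section \<open>The time evolution T_infinity\<close>

definition is_state :: "nat \<Rightarrow> int list list \<Rightarrow> bool" where
  "is_state n qs \<longleftrightarrow> (\<forall>q\<in>set qs. is_box n q)"

definition capacity :: "int list list \<Rightarrow> int" where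
  "capacity qs = sum_list (map sum_list qs)"

lemma is_state_Cons [simp]: "is_state n (q # qs) \<longleftrightarrow> is_box n q \<and> is_state n qs"
  unfolding is_state_def by simp

lemma capacity_Cons [simp]: "capacity (q # qs) = sum_list q + capacity qs"
  unfolding capacity_def by simp

lemma capacity_nonneg: "is_state n qs \<Longrightarrow> capacity qs \<ge> 0"
  unfolding is_state_def capacity_def is_box_def
  by (induction qs) (auto intro: add_nonneg_nonneg sum_list_nonneg)

lemma Tcar_Cons_Rmap [simp]:
  "Tcar n v (q # qs) = fst (Rmap n v q) # Tcar n (snd (Rmap n v q)) qs"
  by (simp split: prod.split)

declare Tcar.simps(2) [simp del]

lemma Tcar_add_nth_0:
  assumes "1 \<le> n"
  shows "is_box n v \<Longrightarrow> is_state n qs \<Longrightarrow> v ! 0 \<ge> capacity qs \<Longrightarrow> c \<ge> 0 \<Longrightarrow>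
    Tcar n (v[0 := v ! 0 + c]) qs = Tcar n v qs"
proof (induction qs arbitrary: v)
  case (Cons q qs)
  let ?w = "snd (Rmap n v q)"
  have "v ! 0 \<ge> sum_list q" using Cons.prems capacity_nonneg[of n qs] by simp
  hence "Rmap n (v[0 := v ! 0 + c]) q = (fst (Rmap n v q), ?w[0 := ?w ! 0 + c])"
    using Cons.prems by (intro Rmap_add_nth_0) auto
  moreover have "?w ! 0 \<ge> capacity qs"
    using Rmap_snd_nth_0_ge[of n v q] Cons.prems by simp
  ultimately show ?case using Cons is_box_Rmap[OF assms, of v q] by simp
qed simp

lemma Tl_eq_Tl_capacity:
  assumes "1 \<le> n" "is_state n qs" "l \<ge> nat (capacity qs)"
  shows "Tl n l qs = Tl n (nat (capacity qs)) qs"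
proof -
  let ?u = "uvec n (nat (capacity qs))"
  have u: "is_box n ?u" "?u ! 0 \<ge> capacity qs"
    using capacity_nonneg[OF assms(2)] by (simp_all add: is_box_def uvec_def)
  have "Tl n l qs = Tcar n (?u[0 := ?u ! 0 + int (l - nat (capacity qs))]) qs"
    unfolding Tl_def using assms(3) by (simp add: uvec_def)
  also have "\<dots> = Tcar n ?u qs" using Tcar_add_nth_0[OF assms(1) u(1) assms(2) u(2)] by simp
  finally show ?thesis unfolding Tl_def .
qed

lemma Tinf_eq_Tl:
  assumes "1 \<le> n" "is_state n qs" "l \<ge> nat (capacity qs)"
  shows "Tinf n qs = Tl n l qs"
proof -
  let ?r = "Tl n (nat (capacity qs)) qs"
  have "Tinf n qs = ?r"
    unfolding Tinf_def
  proof (rule the_equality)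
    show "\<exists>L. \<forall>l\<ge>L. Tl n l qs = ?r" using Tl_eq_Tl_capacity[OF assms(1,2)] by blast
    fix r assume "\<exists>L. \<forall>l\<ge>L. Tl n l qs = r"
    then obtain L where "\<forall>l\<ge>L. Tl n l qs = r" by blast
    thus "r = ?r" using Tl_eq_Tl_capacity[OF assms(1,2), of "max L (nat (capacity qs))"] by simp
  qed
  thus ?thesis using Tl_eq_Tl_capacity[OF assms] by simp
qed

lemma Tinf_eq_Tcar_uvec:
  "1 \<le> n \<Longrightarrow> is_state n qs \<Longrightarrow> Tinf n qs = Tcar n (uvec n (nat (capacity qs))) qs"
  using Tinf_eq_Tl by (simp add: Tl_def)

lemma Tcar_is_state:
  assumes "1 \<le> n"
  shows "is_box n v \<Longrightarrow> is_state n qs \<Longrightarrow>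
    is_state n (Tcar n v qs) \<and> map sum_list (Tcar n v qs) = map sum_list qs"
proof (induction qs arbitrary: v)
  case (Cons q qs)
  thus ?case
    using is_box_Rmap[OF assms, of v q] sum_list_Rmap(1)[of v n q] Cons.IH[of "snd (Rmap n v q)"]
    by (simp add: is_box_def)
qed simp

lemma Tinf_pow_is_state:
  assumes "1 \<le> n" "is_state n qs"
  shows "is_state n ((Tinf n ^^ t) qs) \<and> map sum_list ((Tinf n ^^ t) qs) = map sum_list qs"
proof (induction t)
  case (Suc t)
  let ?q = "(Tinf n ^^ t) qs"
  have "Tinf n ?q = Tcar n (uvec n (nat (capacity ?q))) ?q"
    using Tinf_eq_Tcar_uvec[OF assms(1)] Suc by simp
  moreover have "is_box n (uvec n l)" for l by (simp add: is_box_def uvec_def)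
  ultimately show ?case using Suc Tcar_is_state[OF assms(1)] by simp
qed (use assms in simp)

lemma length_Tinf_pow: "1 \<le> n \<Longrightarrow> is_state n qs \<Longrightarrow> length ((Tinf n ^^ t) qs) = length qs"
  by (metis Tinf_pow_is_state length_map)

definition ball_total :: "nat \<Rightarrow> int list list \<Rightarrow> int" where
  "ball_total n qs = sum_list (map (balls n) qs)"

lemma ball_total_append: "ball_total n (xs @ ys) = ball_total n xs + ball_total n ys"
  unfolding ball_total_def by simp

lemma ball_total_nonneg: "is_state n qs \<Longrightarrow> ball_total n qs \<ge> 0"
  unfolding ball_total_def is_state_def
  by (induction qs) (auto intro!: add_nonneg_nonneg balls_nonneg)

lemma ball_total_take_Suc_Tcar_le:
  assumes "1 \<le> n"
  shows "is_box n v \<Longrightarrow> is_state n qs \<Longrightarrow> v ! 0 \<ge> capacity qs \<Longrightarrow>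
    ball_total n (take (Suc j) (Tcar n v qs)) \<le> balls n v + ball_total n (take j qs)"
proof (induction qs arbitrary: v j)
  case Nil thus ?case using balls_nonneg by (simp add: ball_total_def)
next
  case (Cons q qs)
  let ?w = "snd (Rmap n v q)"
  have big: "v ! 0 \<ge> sum_list q" using Cons.prems capacity_nonneg[of n qs] by simp
  have conservation: "balls n (fst (Rmap n v q)) + balls n ?w = balls n v + balls n q"
    using Cons.prems by (intro balls_Rmap) (auto simp: is_box_def)
  have out: "balls n (fst (Rmap n v q)) \<le> balls n v"
    using Cons.prems big by (intro balls_Rmap_fst_le) auto
  have IH: "ball_total n (take (Suc j') (Tcar n ?w qs)) \<le> balls n ?w + ball_total n (take j' qs)"
    for j'
    using Cons.prems Rmap_snd_nth_0_ge[of n v q] is_box_Rmap(2)[OF assms, of v q]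
    by (intro Cons.IH) auto
  show ?case
  proof (cases j)
    case 0 thus ?thesis using out by (simp add: ball_total_def)
  next
    case (Suc j') thus ?thesis using conservation IH[of j'] by (simp add: ball_total_def)
  qed
qed

lemma ball_total_take_Suc_Tinf_le:
  assumes "1 \<le> n" "is_state n qs"
  shows "ball_total n (take (Suc j) (Tinf n qs)) \<le> ball_total n (take j qs)"
proof -
  let ?u = "uvec n (nat (capacity qs))"
  have u: "balls n ?u = 0" "is_box n ?u" "?u ! 0 \<ge> capacity qs"
    unfolding balls_def uvec_def by (auto simp: nth_Cons' is_box_def intro!: sum.neutral)
  thus ?thesis
    using ball_total_take_Suc_Tcar_le[OF assms(1) u(2) assms(2) u(3), of j]
    by (simp add: Tinf_eq_Tcar_uvec[OF assms])
qed

lemma ball_total_take_Tinf_pow: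
  assumes "1 \<le> n" "is_state n qs"
  shows "j \<le> t \<Longrightarrow> ball_total n (take j ((Tinf n ^^ t) qs)) = 0"
proof (induction t arbitrary: j)
  case (Suc t)
  let ?q = "(Tinf n ^^ t) qs"
  have q: "is_state n ?q" "is_state n (Tinf n ?q)"
    using Tinf_pow_is_state[OF assms, of t] Tinf_pow_is_state[OF assms, of "Suc t"] by simp_all
  show ?case
  proof (cases j)
    case (Suc j')
    have "ball_total n (take (Suc j') (Tinf n ?q)) \<le> ball_total n (take j' ?q)"
      by (rule ball_total_take_Suc_Tinf_le[OF assms(1) q(1)])
    moreover have "ball_total n (take j' ?q) = 0" using Suc.IH Suc.prems Suc by simp
    moreover have "ball_total n (take (Suc j') (Tinf n ?q)) \<ge> 0"
      using q(2) by (intro ball_total_nonneg) (auto simp: is_state_def dest: in_set_takeD)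
    ultimately show ?thesis using Suc by simp
  qed (simp add: ball_total_def)
qed (simp add: ball_total_def)

lemma ball_total_Tinf_pow:
  "1 \<le> n \<Longrightarrow> is_state n qs \<Longrightarrow> length qs \<le> t \<Longrightarrow> ball_total n ((Tinf n ^^ t) qs) = 0"
  using ball_total_take_Tinf_pow[of n qs "length qs" t] length_Tinf_pow[of n qs t] by simp

section \<open>The sums rho\<close>

definition rho_init :: "nat \<Rightarrow> nat \<Rightarrow> int list list \<Rightarrow> int" where
  "rho_init n d q = (\<Sum>j<length q. \<Sum>a\<in>{2..d}. (q ! j) ! (a - 1))"

lemma rho_init_append: "rho_init n d (xs @ ys) = rho_init n d xs + rho_init n d ys"
proof -
  have "rho_init n d q = sum_list (map (\<lambda>x. \<Sum>a\<in>{2..d}. x ! (a - 1)) q)" for q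
    unfolding rho_init_def by (simp add: sum_list_sum_nth atLeast0LessThan)
  thus ?thesis by simp
qed

lemma rho_eq_rho_init_plus_sum:
  assumes "\<And>t. t \<ge> K \<Longrightarrow> ball_total n ((Tinf n ^^ t) q) = 0"
  shows "rho n d q = rho_init n d q + (\<Sum>t\<in>{1..<K}. ball_total n ((Tinf n ^^ t) q))"
proof -
  let ?G = "\<lambda>t. ball_total n ((Tinf n ^^ t) q)"
  have "(\<Sum>j<length qt. \<Sum>a\<in>{2..n+1}. (qt ! j) ! (a - 1)) = ball_total n qt" for qt
    unfolding ball_total_def balls_def by (simp add: sum_list_sum_nth atLeast0LessThan)
  hence "rho n d q = rho_init n d q + (\<Sum>t\<in>{t. 1 \<le> t \<and> ?G t \<noteq> 0}. ?G t)"
    unfolding rho_def rho_init_def Let_def by simp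
  moreover have "(\<Sum>t\<in>{t. 1 \<le> t \<and> ?G t \<noteq> 0}. ?G t) = (\<Sum>t\<in>{1..<K}. ?G t)"
    using assms by (intro sum.mono_neutral_left) (auto, metis leI)
  ultimately show ?thesis by simp
qed

lemma rho_append:
  assumes "1 \<le> k"
    and P_vanishes: "\<forall>t\<ge>k. ball_total n ((Tinf n ^^ t) P) = 0"
    and V_vanishes: "\<forall>t\<ge>K. ball_total n ((Tinf n ^^ t) V) = 0"
    and V_const: "\<forall>t<k. ball_total n ((Tinf n ^^ t) V) = c"
    and early: "\<forall>t<k. ball_total n ((Tinf n ^^ t) (V @ P)) =
                        ball_total n ((Tinf n ^^ t) V) + ball_total n ((Tinf n ^^ t) P)"
    and late: "\<forall>s. ball_total n ((Tinf n ^^ (s + k)) (V @ P)) = ball_total n ((Tinf n ^^ s) V)"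
  shows "rho n d (V @ P) = rho n d V + c * int k + rho n d P"
proof -
  let ?b = "\<lambda>q t. ball_total n ((Tinf n ^^ t) q)"
  have V_vanishes': "?b V t = 0" if "t \<ge> Suc K" for t using V_vanishes that by simp
  have "rho n d (V @ P) = rho_init n d (V @ P) + (\<Sum>t\<in>{1..<k + Suc K}. ?b (V @ P) t)"
  proof (rule rho_eq_rho_init_plus_sum)
    fix t assume "t \<ge> k + Suc K"
    thus "?b (V @ P) t = 0" using late[rule_format, of "t - k"] V_vanishes'[of "t - k"] by simp
  qed
  also have "(\<Sum>t\<in>{1..<k + Suc K}. ?b (V @ P) t) =
      (\<Sum>t\<in>{1..<k}. ?b (V @ P) t) + (\<Sum>t\<in>{k..<k + Suc K}. ?b (V @ P) t)"
    using assms(1) by (intro sum.atLeastLessThan_concat[symmetric]) auto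
  also have "(\<Sum>t\<in>{1..<k}. ?b (V @ P) t) = (\<Sum>t\<in>{1..<k}. c + ?b P t)"
    using early V_const by (intro sum.cong) auto
  also have "(\<Sum>t\<in>{k..<k + Suc K}. ?b (V @ P) t) = (\<Sum>s<Suc K. ?b V s)"
    using late sum.shift_bounds_nat_ivl[of "?b (V @ P)" 0 k "Suc K"]
    by (simp add: atLeast0LessThan add.commute)
  also have "\<dots> = c + (\<Sum>s\<in>{1..<Suc K}. ?b V s)"
    using V_const[rule_format, of 0] assms(1) by (simp add: sum.atLeast1_atMost_eq atLeastLessThanSuc_atLeastAtMost
        lessThan_Suc_atMost sum.atMost_shift)
  finally have "rho n d (V @ P) = rho_init n d V + rho_init n d P + c * int k
      + (\<Sum>s\<in>{1..<Suc K}. ?b V s) + (\<Sum>t\<in>{1..<k}. ?b P t)"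
    using assms(1) by (simp add: rho_init_append sum.distrib algebra_simps of_nat_diff)
  moreover have "rho n d V = rho_init n d V + (\<Sum>s\<in>{1..<Suc K}. ?b V s)"
    using V_vanishes' by (intro rho_eq_rho_init_plus_sum) auto
  moreover have "rho n d P = rho_init n d P + (\<Sum>t\<in>{1..<k}. ?b P t)"
    using P_vanishes by (intro rho_eq_rho_init_plus_sum) auto
  ultimately show ?thesis by simp
qed

section \<open>Staircase words\<close>

text \<open>cell n m a is the element of B_m holding m - 1 letters 1 and one letter a.\<close>

definition cell :: "nat \<Rightarrow> nat \<Rightarrow> nat \<Rightarrow> int list" where
  "cell n m a = map (\<lambda>i. (if i = 1 then int m - 1 else 0) + (if i = a then 1 else 0)) [1..<n+2]"

lemma length_cell [simp]: "length (cell n m a) = n + 1"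
  unfolding cell_def by simp

lemma nth_cell:
  "i < n + 1 \<Longrightarrow> cell n m a ! i = (if i = 0 then int m - 1 else 0) + (if Suc i = a then 1 else 0)"
  unfolding cell_def by (simp del: upt_Suc add: nth_upt)

lemma is_box_cell: "1 \<le> m \<Longrightarrow> is_box n (cell n m a)"
  unfolding is_box_iff_nth by (auto simp: nth_cell)

lemma uvec_eq_cell: "uvec n l = cell n l 1"
  by (rule nth_equalityI) (auto simp: uvec_def nth_cell nth_Cons')

lemma letter_eq_cell: "letter n a = cell n 1 a"
  unfolding letter_def cell_def by simp

lemma balls_cell: "1 \<le> a \<Longrightarrow> a \<le> n + 1 \<Longrightarrow> balls n (cell n m a) = (if 2 \<le> a then 1 else 0)"
proof -
  assume a: "1 \<le> a" "a \<le> n + 1"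
  have "balls n (cell n m a) = (\<Sum>a'\<in>{2..n+1}. (if a' = a then 1 else 0))"
    unfolding balls_def by (rule sum.cong) (auto simp: nth_cell)
  thus ?thesis using a by (simp add: sum.delta)
qed

lemma xc_cell:
  assumes "1 \<le> i" "i \<le> int n + 1" "1 \<le> j" "j \<le> n + 1" "1 \<le> a" "a \<le> n + 1"
  shows "xc n (cell n m a) (i + int j) = (if i + int j = int n + 2 then int m - 1 else 0)
     + (if i + int j = int a then 1 else 0) + (if i + int j = int a + int n + 1 then 1 else 0)"
proof (cases "i + int j \<le> int n + 1")
  case True
  hence "(i + int j - 1) mod int (n+1) = i + int j - 1"
    using assms by (intro mod_pos_pos_trivial) auto
  moreover have "nat (i + int j - 1) < n + 1" using True assms by auto
  ultimately show ?thesis unfolding xc_def using nth_cell True assms by auto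
next
  case False
  have "(i + int j - 1) mod int (n+1) = (i + int j - 1 - int (n+1)) mod int (n+1)"
    using mod_add_self2[of "i + int j - 1 - int (n+1)" "int (n+1)"] by simp
  also have "\<dots> = i + int j - 1 - int (n+1)"
    using assms False by (intro mod_pos_pos_trivial) auto
  finally have "(i + int j - 1) mod int (n+1) = i + int j - 1 - int (n+1)" .
  moreover have "nat (i + int j - 1 - int (n+1)) < n + 1" using False assms by auto
  ultimately show ?thesis unfolding xc_def using nth_cell False assms by auto
qed

lemma sum_if_of_nat_eq:
  assumes "finite A"
  shows "(\<Sum>j\<in>A. if int j = c then v else 0) = (if c \<ge> 0 \<and> nat c \<in> A then v else (0::int))"
proof -
  have "(\<Sum>j\<in>A. if int j = c then v else 0) = (\<Sum>j\<in>A. if j = nat c then (if c \<ge> 0 then v else 0) else 0)"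
    by (rule sum.cong) auto
  thus ?thesis using assms by (simp add: sum.delta)
qed

lemma sum_if_of_nat_eq_atLeastLessThan:
  "(\<Sum>j\<in>{p..<q}. if int j = c then v else 0) = (if int p \<le> c \<and> c < int q then v else (0::int))"
  by (auto simp: sum_if_of_nat_eq)

lemma sum_if_of_nat_eq_atLeastAtMost:
  "(\<Sum>j\<in>{p..q}. if int j = c then v else 0) = (if int p \<le> c \<and> c \<le> int q then v else (0::int))"
  by (auto simp: sum_if_of_nat_eq)

lemma Qterm_cell:
  assumes "1 \<le> i" "i \<le> int n + 1" "1 \<le> k" "k \<le> n + 1" "1 \<le> a" "a \<le> n + 1" "1 \<le> b" "b \<le> n + 1"
  shows "Qterm n (cell n l a) (cell n m b) i k =
     (if 1 \<le> int n + 2 - i \<and> int n + 2 - i < int k then int l - 1 else 0)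
   + (if 1 \<le> int a - i \<and> int a - i < int k then 1 else 0)
   + (if 1 \<le> int a + int n + 1 - i \<and> int a + int n + 1 - i < int k then 1 else 0)
   + (if int k + 1 \<le> int n + 2 - i \<and> int n + 2 - i \<le> int n + 1 then int m - 1 else 0)
   + (if int k + 1 \<le> int b - i \<and> int b - i \<le> int n + 1 then 1 else 0)
   + (if int k + 1 \<le> int b + int n + 1 - i \<and> int b + int n + 1 - i \<le> int n + 1 then 1 else 0)"
proof -
  have "(\<Sum>j\<in>{1..<k}. xc n (cell n l a) (i + int j)) =
     (\<Sum>j\<in>{1..<k}. (if int j = int n + 2 - i then int l - 1 else 0)
     + (if int j = int a - i then 1 else 0) + (if int j = int a + int n + 1 - i then 1 else 0))"
    by (rule sum.cong) (use assms in \<open>auto simp: xc_cell\<close>)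
  moreover have "(\<Sum>j\<in>{k+1..n+1}. xc n (cell n m b) (i + int j)) =
     (\<Sum>j\<in>{k+1..n+1}. (if int j = int n + 2 - i then int m - 1 else 0)
     + (if int j = int b - i then 1 else 0) + (if int j = int b + int n + 1 - i then 1 else 0))"
    by (rule sum.cong) (use assms in \<open>auto simp: xc_cell\<close>)
  ultimately show ?thesis
    unfolding Qterm_def sum.distrib sum_if_of_nat_eq_atLeastLessThan sum_if_of_nat_eq_atLeastAtMost
    by (simp add: algebra_simps)
qed

lemma Qf_cell:
  assumes "1 \<le> i" "i \<le> int n + 1" "2 \<le> l" "1 \<le> m" "1 \<le> a" "a \<le> n + 1" "1 \<le> b" "b \<le> n + 1"
    and "b = 1 \<or> b = a + 1"
  shows "Qf n (cell n l a) (cell n m b) i =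
    (if b = 1 then (if i < int a then 1 else 0) else (if i = int a then 0 else 1))"
proof (rule Qf_eqI)
  let ?k = "nat (int n + 2 - i)"
  show "?k \<in> {1..n+1}" using assms by auto
  have k: "1 \<le> ?k" "?k \<le> n + 1" "int ?k = int n + 2 - i" using assms by auto
  show "Qterm n (cell n l a) (cell n m b) i ?k =
    (if b = 1 then (if i < int a then 1 else 0) else (if i = int a then 0 else 1))"
    unfolding Qterm_cell[OF assms(1,2) k(1,2) assms(5-8)] k(3) using assms by auto
next
  fix k assume "k \<in> {1..n+1}"
  hence k: "1 \<le> k" "k \<le> n + 1" by auto
  show "(if b = 1 then (if i < int a then 1 else 0) else (if i = int a then 0 else 1))
    \<le> Qterm n (cell n l a) (cell n m b) i k"
    unfolding Qterm_cell[OF assms(1,2) k assms(5-8)] using assms k by auto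
qed

lemma Rmap_cell:
  assumes "2 \<le> l" "1 \<le> m" "1 \<le> a" "a \<le> n + 1" "1 \<le> b" "b \<le> n + 1"
    and "b = 1 \<or> b = a + 1"
  shows "Rmap n (cell n l a) (cell n m b) = (cell n m a, cell n l b)"
proof -
  let ?Q = "Qf n (cell n l a) (cell n m b)"
  define V where
    "V i = (if b = 1 then (if i < int a then 1 else 0) else (if i = int a then 0 else (1::int)))" for i
  have Q_nat: "?Q (int i) = V (if i = 0 then int n + 1 else int i)" if "i < n + 1" for i
  proof (cases "i = 0")
    case True
    have "?Q (int n + 1) = V (int n + 1)" unfolding V_def by (rule Qf_cell) (use assms in auto)
    thus ?thesis using True Qf_periodic[of n "cell n l a" "cell n m b" 0] by (simp add: add.commute)
  next
    case False
    have "?Q (int i) = V (int i)" unfolding V_def by (rule Qf_cell) (use assms that False in auto)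
    thus ?thesis using False by simp
  qed
  have Q_Suc: "?Q (int i + 1) = V (int i + 1)" if "i < n + 1" for i
    unfolding V_def by (rule Qf_cell) (use assms that in auto)
  have "fst (Rmap n (cell n l a) (cell n m b)) = cell n m a"
  proof (rule nth_equalityI)
    fix i assume "i < length (fst (Rmap n (cell n l a) (cell n m b)))"
    hence i: "i < n + 1" by (simp add: length_Rmap)
    show "fst (Rmap n (cell n l a) (cell n m b)) ! i = cell n m a ! i"
      unfolding nth_Rmap_fst[OF i] Q_nat[OF i] Q_Suc[OF i] nth_cell[OF i] V_def using assms i by auto
  qed (simp add: length_Rmap)
  moreover have "snd (Rmap n (cell n l a) (cell n m b)) = cell n l b"
  proof (rule nth_equalityI)
    fix i assume "i < length (snd (Rmap n (cell n l a) (cell n m b)))"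
    hence i: "i < n + 1" by (simp add: length_Rmap)
    show "snd (Rmap n (cell n l a) (cell n m b)) ! i = cell n l b ! i"
      unfolding nth_Rmap_snd[OF i] Q_nat[OF i] Q_Suc[OF i] nth_cell[OF i] V_def using assms i by auto
  qed (simp add: length_Rmap)
  ultimately show ?thesis by (metis prod.collapse)
qed

definition cells :: "nat \<Rightarrow> nat list \<Rightarrow> nat list \<Rightarrow> int list list" where
  "cells n caps w = map (\<lambda>(m, a). cell n m a) (zip caps w)"

lemma cells_Nil [simp]: "cells n [] [] = []"
  unfolding cells_def by simp

lemma cells_Cons [simp]: "cells n (m # caps) (a # w) = cell n m a # cells n caps w"
  unfolding cells_def by simp

lemma cells_append:
  "length caps = length w \<Longrightarrow> cells n (caps @ caps') (w @ w') = cells n caps w @ cells n caps' w'"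
  unfolding cells_def by simp

lemma is_state_cells: "\<forall>m\<in>set caps. 1 \<le> m \<Longrightarrow> is_state n (cells n caps w)"
  unfolding is_state_def cells_def by (auto simp: is_box_cell dest!: set_zip_leftD)

fun staircase :: "nat \<Rightarrow> nat \<Rightarrow> nat list \<Rightarrow> bool" where
  "staircase n a [] = True"
| "staircase n a (b # w) = ((b = 1 \<or> b = a + 1) \<and> 1 \<le> b \<and> b \<le> n + 1 \<and> staircase n b w)"

lemma staircase_append:
  "staircase n a (u @ v) \<longleftrightarrow> staircase n a u \<and> staircase n (last (a # u)) v"
  by (induction u arbitrary: a) auto

lemma staircase_take: "staircase n a w \<Longrightarrow> staircase n a (take j w)"
  by (induction w arbitrary: a j) (auto simp: take_Cons')

lemma staircase_replicate_1 [simp]: "staircase n a (replicate r (Suc 0))"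
  by (induction r arbitrary: a) auto

lemma staircase_concat: "\<forall>u\<in>set us. \<forall>a. staircase n a u \<Longrightarrow> staircase n a (concat us)"
  by (induction us arbitrary: a) (auto simp: staircase_append)

text \<open>The carrier exchanges its letter with each box in turn.\<close>

lemma Tcar_cells_append:
  assumes "2 \<le> l"
  shows "length caps = length w \<Longrightarrow> \<forall>m\<in>set caps. 1 \<le> m \<Longrightarrow> 1 \<le> a \<Longrightarrow> a \<le> n + 1 \<Longrightarrow>
    staircase n a w \<Longrightarrow>
    Tcar n (cell n l a) (cells n caps w @ B) =
      cells n caps (butlast (a # w)) @ Tcar n (cell n l (last (a # w))) B"
proof (induction w arbitrary: a caps)
  case (Cons b w)
  then obtain m caps' where caps: "caps = m # caps'" by (cases caps) auto
  have "Rmap n (cell n l a) (cell n m b) = (cell n m a, cell n l b)"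
    using assms Cons.prems caps by (intro Rmap_cell) auto
  thus ?case using Cons caps by simp
qed simp

lemma Tinf_eq_Tcar_cell:
  assumes "1 \<le> n" "is_state n qs" "l \<ge> nat (capacity qs)"
  shows "Tinf n qs = Tcar n (cell n l 1) qs"
  using Tinf_eq_Tl[OF assms] by (simp add: Tl_def uvec_eq_cell)

lemma Tinf_cells_append:
  assumes "1 \<le> n" "length caps = length w" "\<forall>m\<in>set caps. 1 \<le> m" "staircase n 1 w"
    and "is_state n B" "last (1 # w) = 1"
  shows "Tinf n (cells n caps w @ B) = cells n caps (butlast (1 # w)) @ Tinf n B"
proof -
  define l where "l = max 2 (nat (capacity (cells n caps w @ B)))"
  have "capacity B \<le> capacity (cells n caps w @ B)"
    using capacity_nonneg[OF is_state_cells[OF assms(3)]] by (simp add: capacity_def)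
  hence "Tinf n B = Tcar n (cell n l 1) B"
    using assms(1,5) unfolding l_def by (intro Tinf_eq_Tcar_cell) auto
  moreover have "Tinf n (cells n caps w @ B) = Tcar n (cell n l 1) (cells n caps w @ B)"
    using assms(1,3,5) is_state_cells[OF assms(3)] unfolding l_def
    by (intro Tinf_eq_Tcar_cell) (auto simp: is_state_def)
  ultimately show ?thesis
    using Tcar_cells_append[of l caps w 1 n B] assms(2-4,6) unfolding l_def by simp
qed

lemma Tinf_cells:
  assumes "1 \<le> n" "length caps = length w" "\<forall>m\<in>set caps. 1 \<le> m" "staircase n 1 w"
  shows "Tinf n (cells n caps w) = cells n caps (butlast (1 # w))"
proof -
  define l where "l = max 2 (nat (capacity (cells n caps w)))"
  have "Tinf n (cells n caps w) = Tcar n (cell n l 1) (cells n caps w)"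
    using assms(1) is_state_cells[OF assms(3)] unfolding l_def by (intro Tinf_eq_Tcar_cell) auto
  thus ?thesis using Tcar_cells_append[of l caps w 1 n "[]"] assms(2-4) unfolding l_def by simp
qed

definition shift_word :: "nat \<Rightarrow> nat list \<Rightarrow> nat list" where
  "shift_word s w = take (length w) (replicate s 1 @ w)"

lemma length_shift_word [simp]: "length (shift_word s w) = length w"
  unfolding shift_word_def by simp

lemma shift_word_Suc: "shift_word (Suc s) w = butlast (1 # shift_word s w)"
proof -
  have "butlast (1 # take L X) = take L (1 # X)" if "L \<le> length X" for L and X :: "nat list"
    using that by (cases L) (auto simp: butlast_take)
  from this[of "length w" "replicate s 1 @ w"] show ?thesis unfolding shift_word_def by simp
qed

lemma shift_word_append_replicate_1:
  "t \<le> r \<Longrightarrow> shift_word t (u @ replicate r 1) = replicate t 1 @ u @ replicate (r - t) 1"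
  unfolding shift_word_def by (simp add: take_append min_def replicate_add[symmetric])

lemma staircase_shift_word: "staircase n 1 w \<Longrightarrow> staircase n 1 (shift_word s w)"
proof (induction s)
  case (Suc s)
  hence "staircase n 1 (take (length w) (1 # shift_word s w))"
    by (intro staircase_take) simp
  thus ?case by (simp add: shift_word_Suc butlast_conv_take)
qed (simp add: shift_word_def)

lemma Tinf_pow_cells:
  assumes "1 \<le> n" "length caps = length w" "\<forall>m\<in>set caps. 1 \<le> m" "staircase n 1 w"
  shows "(Tinf n ^^ s) (cells n caps w) = cells n caps (shift_word s w)"
proof (induction s)
  case (Suc s)
  thus ?case
    using Tinf_cells[OF assms(1), of caps "shift_word s w"] assms staircase_shift_word
    by (simp add: shift_word_Suc)
qed (simp add: shift_word_def)

lemma Tinf_pow_cells_append: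
  assumes "1 \<le> n" "length caps = length w" "\<forall>m\<in>set caps. 1 \<le> m" "staircase n 1 w"
    and "is_state n B"
  shows "(\<forall>s<t. last (1 # shift_word s w) = 1) \<Longrightarrow>
    (Tinf n ^^ t) (cells n caps w @ B) = cells n caps (shift_word t w) @ (Tinf n ^^ t) B"
proof (induction t)
  case (Suc t)
  have "is_state n ((Tinf n ^^ t) B)" using Tinf_pow_is_state[OF assms(1,5)] by blast
  thus ?case
    using Suc Tinf_cells_append[OF assms(1), of caps "shift_word t w" "(Tinf n ^^ t) B"]
      assms staircase_shift_word
    by (simp add: shift_word_Suc)
qed (simp add: shift_word_def)

lemma box_eq_cell_if_no_balls:
  assumes "is_box n q" "balls n q = 0"
  shows "q = cell n (nat (sum_list q)) 1"
proof (rule nth_equalityI)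
  have lq: "length q = n + 1" using assms(1) is_box_def by auto
  thus "length q = length (cell n (nat (sum_list q)) 1)" by simp
  have zero: "\<forall>a\<in>{2..n+1}. q ! (a - 1) = 0"
    using assms unfolding balls_def is_box_iff_nth by (subst sum_nonneg_eq_0_iff[symmetric]) auto
  have "q ! i = 0" if "0 < i" "i < n + 1" for i
    using zero[rule_format, of "Suc i"] that by simp
  moreover have "q ! 0 \<ge> 0" using assms(1) by (auto simp: is_box_iff_nth)
  ultimately show "q ! i = cell n (nat (sum_list q)) 1 ! i" if "i < length q" for i
    using that lq sum_list_eq_nth_0_plus_balls[OF lq] assms(2) by (auto simp: nth_cell)
qed

lemma Tinf_pow_length_eq_cells:
  assumes "1 \<le> n" "is_state n P"
  shows "(Tinf n ^^ length P) P = cells n (map (\<lambda>q. nat (sum_list q)) P) (replicate (length P) 1)"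
proof -
  let ?S = "(Tinf n ^^ length P) P"
  have S: "is_state n ?S" "map sum_list ?S = map sum_list P" using Tinf_pow_is_state[OF assms] by auto
  have "ball_total n ?S = 0" by (rule ball_total_Tinf_pow[OF assms]) simp
  hence "\<forall>q\<in>set ?S. balls n q = 0"
    using S(1) unfolding ball_total_def is_state_def
    by (subst (asm) sum_list_nonneg_eq_0_iff) (auto intro: balls_nonneg)
  hence "?S = map (\<lambda>q. cell n (nat (sum_list q)) 1) ?S"
    using S(1) box_eq_cell_if_no_balls unfolding is_state_def by (simp add: map_idI)
  also have "\<dots> = map (\<lambda>s. cell n (nat s) 1) (map sum_list P)"
    by (simp only: S(2)[symmetric] map_map comp_def)
  finally show ?thesis by (simp add: cells_def zip_replicate2 map_map comp_def)
qed

definition ball_letters :: "nat list \<Rightarrow> int" where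
  "ball_letters w = int (length (filter (\<lambda>a. 2 \<le> a) w))"

lemma ball_letters_append [simp]: "ball_letters (u @ v) = ball_letters u + ball_letters v"
  unfolding ball_letters_def by simp

lemma ball_letters_replicate_1 [simp]: "ball_letters (replicate r (Suc 0)) = 0"
  unfolding ball_letters_def by (induction r) auto

lemma ball_total_cells:
  "length caps = length w \<Longrightarrow> staircase n a w \<Longrightarrow> ball_total n (cells n caps w) = ball_letters w"
proof (induction w arbitrary: caps a)
  case (Cons b w)
  then obtain m caps' where "caps = m # caps'" by (cases caps) auto
  thus ?case using Cons balls_cell[of b n m] by (auto simp: ball_total_def ball_letters_def)
qed (simp add: ball_total_def ball_letters_def)

lemma ball_total_Tinf_pow_cells:
  assumes "1 \<le> n" "length caps = length w" "\<forall>m\<in>set caps. 1 \<le> m" "staircase n 1 w"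
  shows "ball_total n ((Tinf n ^^ s) (cells n caps w)) = ball_letters (take (length w - s) w)"
proof -
  have "ball_total n ((Tinf n ^^ s) (cells n caps w)) = ball_letters (shift_word s w)"
    using Tinf_pow_cells[OF assms] ball_total_cells[of caps "shift_word s w" n 1] assms(2)
      staircase_shift_word[OF assms(4)]
    by simp
  thus ?thesis unfolding shift_word_def by (simp add: take_append)
qed

lemma Tinf_pow_cells_replicate_1_append:
  assumes "1 \<le> n" "length caps = length (u @ replicate r 1)" "\<forall>m\<in>set caps. 1 \<le> m"
    and "staircase n 1 u" "is_state n B" "t \<le> r"
  shows "(Tinf n ^^ t) (cells n caps (u @ replicate r 1) @ B) =
    (Tinf n ^^ t) (cells n caps (u @ replicate r 1)) @ (Tinf n ^^ t) B"
proof -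
  have w: "staircase n 1 (u @ replicate r 1)"
    using assms(4) by (simp add: staircase_append)
  have "last (1 # shift_word s (u @ replicate r 1)) = 1" if "s < t" for s
  proof -
    have "r - s = Suc (r - Suc s)" using that assms(6) by linarith
    thus ?thesis using shift_word_append_replicate_1[of s r u] that assms(6) by simp
  qed
  thus ?thesis
    using Tinf_pow_cells_append[OF assms(1-3) w assms(5)] Tinf_pow_cells[OF assms(1-3) w] by simp
qed

lemma Tinf_pow_length_cells_replicate_1_append:
  assumes "1 \<le> n" "length caps = length (u @ replicate r 1)" "\<forall>m\<in>set caps. 1 \<le> m"
    and "staircase n 1 u" "is_state n P" "length P \<le> r"
  shows "(Tinf n ^^ length P) (cells n caps (u @ replicate r 1) @ P) =
    cells n (caps @ map (\<lambda>q. nat (sum_list q)) P) (replicate (length P) 1 @ u @ replicate r 1)"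
proof -
  let ?k = "length P"
  have "(Tinf n ^^ ?k) (cells n caps (u @ replicate r 1) @ P) =
      cells n caps (shift_word ?k (u @ replicate r 1)) @
      cells n (map (\<lambda>q. nat (sum_list q)) P) (replicate ?k 1)"
    using Tinf_pow_cells_replicate_1_append[OF assms(1-5) assms(6)] Tinf_pow_cells[OF assms(1-3)]
      Tinf_pow_length_eq_cells[OF assms(1,5)] assms(4)
    by (simp add: staircase_append)
  also have "\<dots> = cells n (caps @ map (\<lambda>q. nat (sum_list q)) P)
      (shift_word ?k (u @ replicate r 1) @ replicate ?k 1)"
    using assms(2) by (simp add: cells_append)
  also have "shift_word ?k (u @ replicate r 1) @ replicate ?k 1 = replicate ?k 1 @ u @ replicate r 1"
    using shift_word_append_replicate_1[of ?k r u] assms(6) by (simp add: replicate_add[symmetric])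
  finally show ?thesis .
qed

text \<open>For the first |P| steps the carrier leaves the vacuum with letter 1, so vacuum and P
  evolve independently; afterwards the vacuum evolves alone behind |P| empty boxes.\<close>

lemma rho_cells_replicate_1_append:
  assumes "1 \<le> n" "length caps = length (u @ replicate r 1)" "\<forall>m\<in>set caps. 1 \<le> m"
    and "staircase n 1 u" "is_state n P" "\<forall>q\<in>set P. sum_list q \<ge> 1" "P \<noteq> []"
    and "length P \<le> r"
  shows "rho n d (cells n caps (u @ replicate r 1) @ P) =
    rho n d (cells n caps (u @ replicate r 1)) + ball_letters u * int (length P) + rho n d P"
proof (rule rho_append)
  let ?w = "u @ replicate r 1" and ?V = "cells n caps (u @ replicate r 1)"
  have w: "staircase n 1 ?w" using assms(4) by (simp add: staircase_append)
  have V: "ball_total n ((Tinf n ^^ t) ?V) = ball_letters (take (length ?w - t) ?w)" for t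
    by (rule ball_total_Tinf_pow_cells[OF assms(1-3) w])
  show "\<forall>t\<ge>length ?w. ball_total n ((Tinf n ^^ t) ?V) = 0"
    using V by (simp add: ball_letters_def)
  show "\<forall>t<length P. ball_total n ((Tinf n ^^ t) ?V) = ball_letters u"
    using V assms(8) by (simp add: take_append)
  show "\<forall>t<length P. ball_total n ((Tinf n ^^ t) (?V @ P)) =
    ball_total n ((Tinf n ^^ t) ?V) + ball_total n ((Tinf n ^^ t) P)"
    using Tinf_pow_cells_replicate_1_append[OF assms(1-5)] assms(8) by (simp add: ball_total_append)
  show "\<forall>s. ball_total n ((Tinf n ^^ (s + length P)) (?V @ P)) = ball_total n ((Tinf n ^^ s) ?V)"
  proof
    fix s
    let ?caps = "caps @ map (\<lambda>q. nat (sum_list q)) P" and ?W = "replicate (length P) 1 @ ?w"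
    have "ball_total n ((Tinf n ^^ (s + length P)) (?V @ P)) = ball_total n ((Tinf n ^^ s) (cells n ?caps ?W))"
      using Tinf_pow_length_cells_replicate_1_append[OF assms(1-5) assms(8)] by (simp add: funpow_add)
    also have "\<dots> = ball_letters (take (length ?W - s) ?W)"
      using assms(2,3,6) w
      by (intro ball_total_Tinf_pow_cells[OF assms(1)]) (auto simp: staircase_append)
    also have "\<dots> = ball_total n ((Tinf n ^^ s) ?V)"
      using V by (simp add: take_append ball_letters_def)
    finally show "ball_total n ((Tinf n ^^ (s + length P)) (?V @ P)) = ball_total n ((Tinf n ^^ s) ?V)" .
  qed
qed (use ball_total_Tinf_pow[OF assms(1,5)] assms(7) in \<open>auto simp: Suc_le_eq\<close>)

section \<open>The vacuum\<close>

definition vacuum_word :: "(nat \<Rightarrow> nat) \<Rightarrow> nat list \<Rightarrow> nat list" where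
  "vacuum_word M bs = concat (map (\<lambda>b. concat (replicate (M b) [1..<b+1])) bs)"

lemma vacuum_word_eq_append_replicate_1:
  assumes "1 \<le> n"
  shows "vacuum_word M (rev [1..<n+1]) = vacuum_word M (rev [2..<n+1]) @ replicate (M 1) 1"
proof -
  have "[1..<n+1] = 1 # [2..<n+1]"
    using assms upt_conv_Cons[of 1 "n+1"] by (simp del: upt_Suc add: numeral_2_eq_2)
  moreover have "concat (replicate r [x]) = replicate r x" for r and x :: nat
    by (induction r) auto
  ultimately show ?thesis unfolding vacuum_word_def by simp
qed

lemma pvac_eq_cells:
  assumes "1 \<le> n"
  shows "pvac n M = cells n (replicate (length (vacuum_word M (rev [2..<n+1])) + M 1) 1)
    (vacuum_word M (rev [2..<n+1]) @ replicate (M 1) 1)"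
proof -
  have "map (cell n 1) w = cells n (replicate (length w) 1) w" for w
    by (induction w) auto
  moreover have "letter n = cell n 1" using letter_eq_cell by blast
  hence "pvac n M = map (cell n 1) (vacuum_word M (rev [1..<n+1]))"
    unfolding pvac_def vacuum_word_def by (simp add: map_concat comp_def del: upt_Suc)
  ultimately show ?thesis using vacuum_word_eq_append_replicate_1[OF assms] by simp
qed

lemma staircase_upt_1: "b \<le> n + 1 \<Longrightarrow> staircase n a [1..<Suc b]"
proof (induction b arbitrary: a)
  case (Suc b)
  have "last (a # [1..<Suc b]) = (if b = 0 then a else b)" by (cases b) auto
  thus ?case using Suc by (simp add: staircase_append)
qed simp

lemma staircase_vacuum_word:
  assumes "\<forall>b\<in>set bs. b \<le> n + 1"
  shows "staircase n a (vacuum_word M bs)"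
  unfolding vacuum_word_def
proof (intro staircase_concat ballI allI)
  fix v c assume "v \<in> set (map (\<lambda>b. concat (replicate (M b) [1..<b+1])) bs)"
  then obtain b where b: "b \<in> set bs" and v: "v = concat (replicate (M b) [1..<Suc b])" by auto
  have "staircase n d [1..<Suc b]" for d by (rule staircase_upt_1) (use assms b in auto)
  thus "staircase n c v" unfolding v by (intro staircase_concat) auto
qed

lemma ball_letters_upt_1: "ball_letters [1..<Suc b] = int (b - 1)"
  unfolding ball_letters_def by (induction b) auto

lemma ball_letters_vacuum_word:
  "\<forall>b\<in>set bs. 1 \<le> b \<Longrightarrow> ball_letters (vacuum_word M bs) = (\<Sum>b\<leftarrow>bs. int ((b - 1) * M b))"
proof (induction bs)
  case (Cons b bs)
  have "ball_letters (concat (replicate m [1..<Suc b])) = int (m * (b - 1))" for m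
    using ball_letters_upt_1[of b] by (induction m) (simp_all add: ball_letters_def del: upt_Suc)
  thus ?case using Cons by (simp add: vacuum_word_def mult.commute)
qed (simp add: vacuum_word_def ball_letters_def)

lemma ball_letters_vacuum_word_L1: "ball_letters (vacuum_word M (rev [2..<n+1])) = int (L1 n M)"
proof -
  have "ball_letters (vacuum_word M (rev [2..<n+1])) = (\<Sum>b\<leftarrow>[2..<n+1]. int ((b - 1) * M b))"
    by (simp add: ball_letters_vacuum_word rev_map[symmetric] sum_list_rev)
  also have "\<dots> = (\<Sum>b\<in>{2..<n+1}. int ((b - 1) * M b))"
    by (subst sum_list_distinct_conv_sum_set) (simp_all del: upt_Suc)
  also have "\<dots> = int (L1 n M)"
    unfolding L1_def by (simp add: atLeastLessThanSuc_atLeastAtMost)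
  finally show ?thesis .
qed

theorem lemma7p3:
  fixes n :: nat and p :: "int list list" and lam :: "nat \<Rightarrow> nat"
  assumes "n \<ge> 1"
    and "\<forall>j<length p. lam j \<ge> 1 \<and> inB n (lam j) (p ! j)"
  shows "\<exists>N. \<forall>M :: nat \<Rightarrow> nat. (\<forall>b\<in>{1..n}. M b \<ge> N) \<longrightarrow>
           (\<forall>k\<in>{1..length p}. \<forall>i\<in>{1..n+1}.
              rho n i (pvac n M @ take k p) =
                rho n i (pvac n M) + int (L1 n M) * int k + rho n i (take k p))"
proof (intro exI allI impI ballI)
  fix M :: "nat \<Rightarrow> nat" and k i
  assume M: "\<forall>b\<in>{1..n}. M b \<ge> length p" and k: "k \<in> {1..length p}"
  let ?u = "vacuum_word M (rev [2..<n+1])" and ?P = "take k p"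
  have "\<forall>q\<in>set ?P. is_box n q \<and> sum_list q \<ge> 1"
    using assms(2) by (auto simp: in_set_conv_nth inB_iff_is_box)
  moreover have "staircase n 1 ?u" by (rule staircase_vacuum_word) auto
  moreover have "length ?P \<le> M 1" using M[rule_format, of 1] k assms(1) by auto
  ultimately have
    "rho n i (pvac n M @ ?P) = rho n i (pvac n M) + ball_letters ?u * int (length ?P) + rho n i ?P"
    unfolding pvac_eq_cells[OF assms(1)] using k
    by (intro rho_cells_replicate_1_append[OF assms(1)]) (auto simp: is_state_def)
  thus "rho n i (pvac n M @ ?P) = rho n i (pvac n M) + int (L1 n M) * int k + rho n i ?P"
    unfolding ball_letters_vacuum_word_L1 using k by simp
qed

end
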